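(* Let $(\boldsymbol{\beta},\mathbf{u})$ be a domain index, i.e. $(\boldsymbol{\beta},\mathbf{u}) \in \operatorname{argmax}_{\boldsymbol{\beta}',\mathbf{u}'} \big[I_{\mathbf{x}}(\boldsymbol{\beta}',\mathbf{u}') + I_y(\boldsymbol{\beta}')\big]$, the argmax being over domain-associated variables $\boldsymbol{\beta}'$ and data-associated variables $\mathbf{u}'$. Then $I_{\mathbf{x}}(\boldsymbol{\beta},\mathbf{u}) = H(\mathbf{x})$ and $I_y(\boldsymbol{\beta}) = I(y;\mathbf{x})$.
   Context: Data $\mathbf{x}$, label $y$ and a domain variable are given random variables. A domain-associated variable $\boldsymbol{\beta}$ is one that takes the same value for all data in a given domain (this includes constants); a data-associated variable $\mathbf{u}$ may take a different value for each data point (this includes constants). A data encoding $\mathbf{z}$ is a random variable obtained from $\mathbf{x}$ through a conditional distribution $q(\mathbf{z}\mid\mathbf{x})$ (so $\mathbf{z}$ is conditionally independent of all other variables given $\mathbf{x}$; e.g. $\mathbf{z}=\mathbf{x}$ is allowed). Data orthogonal information: $I_{\mathbf{x}}(\boldsymbol{\beta},\mathbf{u}) := \max_{\mathbf{z}:\,\mathbf{z}\perp\!\!\!\perp\boldsymbol{\beta}} I(\mathbf{x};\mathbf{u},\boldsymbol{\beta},\mathbf{z})$; label orthogonal information: $I_y(\boldsymbol{\beta}) := \max_{\mathbf{z}:\,\mathbf{z}\perp\!\!\!\perp\boldsymbol{\beta}} I(y;\mathbf{z})$, the maxima being over data encodings $\mathbf{z}$ independent of $\boldsymbol{\beta}$.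 $H(\mathbf{x})$ is the (Shannon) entropy of $\mathbf{x}$; the variables are taken discrete so that $I(\mathbf{x};\mathbf{x})=H(\mathbf{x})$. *)

theory Defs
  imports "HOL-Probability.Probability"
begin

text \<open>The underlying data distribution is a pmf P on a sample space 'a;
  the given random variables are x = X, y = Y and the domain variable D.
  Auxiliary variables (domain-associated beta, data-associated u, encodings z) take values
  in nat (any discrete variable can be relabelled injectively into nat).\<close>

definition MI :: "'w pmf \<Rightarrow> ('w \<Rightarrow> 's) \<Rightarrow> ('w \<Rightarrow> 't) \<Rightarrow> real" where
  "MI M A B = prob_space.mutual_information (measure_pmf M) 2
      (count_space UNIV) (count_space UNIV) A B"

definition Ent :: "'w pmf \<Rightarrow> ('w \<Rightarrow> 's) \<Rightarrow> real" where
  "Ent M A = prob_space.entropy (measure_pmf M) 2 (count_space UNIV) A"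

definition Indep :: "'w pmf \<Rightarrow> ('w \<Rightarrow> 's) \<Rightarrow> ('w \<Rightarrow> 't) \<Rightarrow> bool" where
  "Indep M A B = (\<forall>a b. measure_pmf.prob M {w. A w = a \<and> B w = b}
      = measure_pmf.prob M {w. A w = a} * measure_pmf.prob M {w. B w = b})"

text \<open>Data encoding: a conditional distribution q(z|x). The joint law of (data point, z).\<close>
definition ext :: "'a pmf \<Rightarrow> ('a \<Rightarrow> 'x) \<Rightarrow> ('x \<Rightarrow> nat pmf) \<Rightarrow> ('a \<times> nat) pmf" where
  "ext P X q = bind_pmf P (\<lambda>\<omega>. map_pmf (\<lambda>z. (\<omega>, z)) (q (X \<omega>)))"

text \<open>A domain-associated variable is beta = g(D); a data-associated variable is u(omega).
  Data orthogonal information I_x(beta,u).\<close>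
definition Ix :: "'a pmf \<Rightarrow> ('a \<Rightarrow> 'x) \<Rightarrow> ('a \<Rightarrow> 'd) \<Rightarrow> ('d \<Rightarrow> nat) \<Rightarrow> ('a \<Rightarrow> nat) \<Rightarrow> real" where
  "Ix P X D g u = (SUP q \<in> {q. Indep (ext P X q) snd (\<lambda>w. g (D (fst w)))}.
      MI (ext P X q) (\<lambda>w. X (fst w)) (\<lambda>w. (u (fst w), g (D (fst w)), snd w)))"

definition Iy :: "'a pmf \<Rightarrow> ('a \<Rightarrow> 'x) \<Rightarrow> ('a \<Rightarrow> 'y) \<Rightarrow> ('a \<Rightarrow> 'd) \<Rightarrow> ('d \<Rightarrow> nat) \<Rightarrow> real" where
  "Iy P X Y D g = (SUP q \<in> {q. Indep (ext P X q) snd (\<lambda>w. g (D (fst w)))}.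
      MI (ext P X q) (\<lambda>w. Y (fst w)) snd)"

end

theory Submission
  imports Defs
begin

text \<open>Every quantity inside the supremum defining \<open>I\<^sub>x(\<beta>, u)\<close> is a mutual information
  \<open>I(x; u, \<beta>, z)\<close>, hence at most \<open>H(x)\<close>; every quantity inside the supremum defining
  \<open>I\<^sub>y(\<beta>)\<close> is \<open>I(y; z)\<close> with \<open>z\<close> drawn from \<open>x\<close> alone, hence at most \<open>I(y; x)\<close> by the
  data processing inequality. A constant \<open>\<beta>\<close> attains both bounds at once: with \<open>u\<close> an
  injective relabelling of \<open>x\<close>, the constant encoding gives \<open>I(x; u, \<beta>, z) = H(x)\<close>; and every
  encoding is independent of a constant \<open>\<beta>\<close>, in particular the injective relabelling \<open>z\<close> of
  \<open>x\<close>, which gives \<open>I(y; z) = I(y; x)\<close>. So the maximal value of the objective is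
  \<open>H(x) + I(y; x)\<close>, and a maximiser must attain both upper bounds.\<close>

definition dependence_ratio :: "('s \<times> 't) pmf \<Rightarrow> 's \<times> 't \<Rightarrow> real" where
  "dependence_ratio r z = pmf r z / (pmf (map_pmf fst r) (fst z) * pmf (map_pmf snd r) (snd z))"

definition pmi :: "('s \<times> 't) pmf \<Rightarrow> 's \<times> 't \<Rightarrow> real" where
  "pmi r z = log 2 (dependence_ratio r z)"

lemma pmf_le_pmf_map_fst: "pmf r (x, y) \<le> pmf (map_pmf fst r) x"
proof -
  have "measure_pmf.prob r {(x, y)} \<le> measure_pmf.prob r (fst -` {x})"
    by (rule measure_pmf.finite_measure_mono) auto
  then show ?thesis by (simp only: measure_pmf_single pmf_map)
qed

lemma pmf_le_pmf_map_snd: "pmf r (x, y) \<le> pmf (map_pmf snd r) y"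
proof -
  have "measure_pmf.prob r {(x, y)} \<le> measure_pmf.prob r (snd -` {y})"
    by (rule measure_pmf.finite_measure_mono) auto
  then show ?thesis by (simp only: measure_pmf_single pmf_map)
qed

text \<open>On uncountable types \<open>count_space UNIV \<Otimes>\<^sub>M count_space UNIV\<close> is not the discrete
  \<sigma>-algebra, so measurability of densities on pairs needs the finite first coordinate.\<close>

lemma borel_measurable_pair_count_space_finite_fst:
  fixes f :: "'s \<times> 't \<Rightarrow> real"
  assumes "finite F" and "\<And>x y. x \<notin> F \<Longrightarrow> f (x, y) = 0"
  shows "f \<in> borel_measurable (count_space UNIV \<Otimes>\<^sub>M count_space UNIV)"
proof -
  have "f = (\<lambda>z. \<Sum>a\<in>F. indicator {a} (fst z) * f (a, snd z))"
  proof
    fix z :: "'s \<times> 't"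
    show "f z = (\<Sum>a\<in>F. indicator {a} (fst z) * f (a, snd z))"
      using assms by (cases z, cases "fst z \<in> F") (auto simp: indicator_def if_distrib sum.delta)
  qed
  also have "\<dots> \<in> borel_measurable (count_space UNIV \<Otimes>\<^sub>M count_space UNIV)"
    by (intro borel_measurable_sum borel_measurable_times
        measurable_compose[OF measurable_fst] measurable_compose[OF measurable_snd]) simp_all
  finally show ?thesis .
qed

lemma nn_integral_pair_measure_pmf:
  assumes "f \<in> borel_measurable (count_space UNIV \<Otimes>\<^sub>M count_space UNIV)"
  shows "integral\<^sup>N (measure_pmf p \<Otimes>\<^sub>M measure_pmf q) f = integral\<^sup>N (pair_pmf p q) f"
proof -
  have "sets (measure_pmf p \<Otimes>\<^sub>M measure_pmf q) = sets (count_space UNIV \<Otimes>\<^sub>M count_space UNIV)"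
    by (intro sets_pair_measure_cong) auto
  with assms have "f \<in> borel_measurable (measure_pmf p \<Otimes>\<^sub>M measure_pmf q)"
    by (subst measurable_cong_sets) auto
  then have "integral\<^sup>N (measure_pmf p \<Otimes>\<^sub>M measure_pmf q) f = (\<integral>\<^sup>+x. \<integral>\<^sup>+y. f (x, y) \<partial>q \<partial>p)"
    by (rule measure_pmf.nn_integral_fst[symmetric])
  also have "\<dots> = integral\<^sup>N (pair_pmf p q) f"
    by (simp add: nn_integral_pair_pmf')
  finally show ?thesis .
qed

lemma MI_joint: "MI M A B = MI (map_pmf (\<lambda>w. (A w, B w)) M) fst snd"
proof -
  have "distr (measure_pmf M) (count_space UNIV \<Otimes>\<^sub>M count_space UNIV) (\<lambda>w. (A w, B w)) =
      distr (measure_pmf (map_pmf (\<lambda>w. (A w, B w)) M)) (count_space UNIV \<Otimes>\<^sub>M count_space UNIV) (\<lambda>z. (fst z, snd z))"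
    by (simp add: map_pmf_rep_eq distr_distr comp_def space_pair_measure)
  then show ?thesis
    unfolding MI_def prob_space.mutual_information_def[OF measure_pmf.prob_space_axioms]
    by (simp add: map_pmf_rep_eq[symmetric] map_pmf_comp)
qed

lemma borel_measurable_dependence_ratio:
  fixes r :: "('s \<times> 't) pmf"
  assumes "finite (fst ` set_pmf r)"
  shows "dependence_ratio r \<in> borel_measurable (count_space UNIV \<Otimes>\<^sub>M count_space UNIV)"
proof (rule borel_measurable_pair_count_space_finite_fst[OF assms])
  fix x y assume "x \<notin> fst ` set_pmf r"
  then have "pmf r (x, y) = 0"
    by (simp add: pmf_eq_0_set_pmf image_iff) (metis fst_conv)
  then show "dependence_ratio r (x, y) = 0"
    by (simp add: dependence_ratio_def)
qed

lemma density_dependence_ratio: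
  fixes r :: "('s \<times> 't) pmf"
  defines "N \<equiv> measure_pmf (map_pmf fst r) \<Otimes>\<^sub>M measure_pmf (map_pmf snd r)"
  assumes fin: "finite (fst ` set_pmf r)"
  shows "density N (dependence_ratio r) = distr r (count_space UNIV \<Otimes>\<^sub>M count_space UNIV) (\<lambda>z. z)"
    (is "_ = ?Q")
proof (rule measure_eqI)
  have sets_N: "sets N = sets (count_space UNIV \<Otimes>\<^sub>M count_space UNIV)"
    unfolding N_def by (intro sets_pair_measure_cong) auto
  then show "sets (density N (dependence_ratio r)) = sets ?Q"
    by simp
  have pmf_r: "ennreal (pmf r z) = ennreal (pmf (pair_pmf (map_pmf fst r) (map_pmf snd r)) z) * dependence_ratio r z"
    for z
  proof (cases z)
    case (Pair x y)
    have "pmf r (x, y) = 0" if "pmf (map_pmf fst r) x * pmf (map_pmf snd r) y = 0"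
      using that pmf_le_pmf_map_fst[of r x y] pmf_le_pmf_map_snd[of r x y] pmf_nonneg[of r "(x, y)"]
      by (auto simp: mult_eq_0_iff)
    then show ?thesis
      by (cases "pmf (map_pmf fst r) x * pmf (map_pmf snd r) y = 0")
         (auto simp: Pair dependence_ratio_def pmf_pair ennreal_mult'[symmetric])
  qed
  note f_meas = borel_measurable_dependence_ratio[OF fin]
  fix E assume "E \<in> sets (density N (dependence_ratio r))"
  then have E: "E \<in> sets (count_space UNIV \<Otimes>\<^sub>M count_space UNIV)"
    by (simp add: sets_N)
  have "emeasure (density N (dependence_ratio r)) E = (\<integral>\<^sup>+z. ennreal (dependence_ratio r z) * indicator E z \<partial>N)"
    using E f_meas by (simp add: emeasure_density sets_N measurable_cong_sets[OF sets_N refl])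
  also have "\<dots> = (\<integral>\<^sup>+z. ennreal (dependence_ratio r z) * indicator E z \<partial>pair_pmf (map_pmf fst r) (map_pmf snd r))"
    unfolding N_def using E f_meas
    by (intro nn_integral_pair_measure_pmf borel_measurable_times_ennreal borel_measurable_indicator
        measurable_compose[OF _ measurable_ennreal])
  also have "\<dots> = (\<integral>\<^sup>+z. ennreal (pmf r z) * indicator E z \<partial>count_space UNIV)"
    unfolding nn_integral_measure_pmf by (simp add: pmf_r mult.assoc)
  also have "\<dots> = emeasure ?Q E"
    using E by (simp add: emeasure_distr space_pair_measure nn_integral_measure_pmf[symmetric])
  finally show "emeasure (density N (dependence_ratio r)) E = emeasure ?Q E" .
qed

lemma MI_fst_snd_eq_integral_pmi:
  fixes r :: "('s \<times> 't) pmf"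
  assumes fin: "finite (fst ` set_pmf r)"
  shows "MI r fst snd = (\<integral>z. pmi r z \<partial>r)"
proof -
  define N where "N = measure_pmf (map_pmf fst r) \<Otimes>\<^sub>M measure_pmf (map_pmf snd r)"
  interpret N: prob_space N
    unfolding N_def by (intro prob_space_pair measure_pmf.prob_space_axioms)
  have sets_N: "sets N = sets (count_space UNIV \<Otimes>\<^sub>M count_space UNIV)"
    unfolding N_def by (intro sets_pair_measure_cong) auto
  note f_meas = borel_measurable_dependence_ratio[OF fin]
  have f_N: "dependence_ratio r \<in> borel_measurable N"
    using f_meas by (subst measurable_cong_sets[OF sets_N refl])
  have f_nonneg: "0 \<le> dependence_ratio r z" for z
    by (simp add: dependence_ratio_def)
  note density = density_dependence_ratio[OF fin, folded N_def]
  have "MI r fst snd = KL_divergence 2 N (density N (dependence_ratio r))"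
    unfolding MI_def prob_space.mutual_information_def[OF measure_pmf.prob_space_axioms] density
    by (simp add: N_def map_pmf_rep_eq)
  also have "\<dots> = (\<integral>z. dependence_ratio r z * log 2 (dependence_ratio r z) \<partial>N)"
    by (rule N.KL_density) (simp_all add: f_N f_nonneg)
  also have "\<dots> = (\<integral>z. log 2 (dependence_ratio r z) \<partial>density N (dependence_ratio r))"
    using measurable_compose[OF f_N, of "log 2"] by (subst integral_density) (simp_all add: f_N f_nonneg)
  also have "\<dots> = (\<integral>z. pmi r z \<partial>r)"
    unfolding density pmi_def using measurable_compose[OF f_meas, of "log 2"]
    by (subst integral_distr) (simp_all add: space_pair_measure)
  finally show ?thesis .
qed

lemma MI_cong:
  assumes "map_pmf (\<lambda>w. (A w, B w)) M = map_pmf (\<lambda>w. (A' w, B' w)) N"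
  shows "MI M A B = MI N A' B'"
  unfolding MI_joint[of M A B] MI_joint[of N A' B'] assms ..

lemma MI_eq_integral_pmi:
  assumes "finite (A ` set_pmf M)"
  shows "MI M A B = (\<integral>w. pmi (map_pmf (\<lambda>w. (A w, B w)) M) (A w, B w) \<partial>M)"
proof -
  have "fst ` set_pmf (map_pmf (\<lambda>w. (A w, B w)) M) = A ` set_pmf M"
    by (simp add: image_image)
  then show ?thesis
    using assms by (simp add: MI_joint[of M A B] MI_fst_snd_eq_integral_pmi)
qed

lemma Ent_eq_integral: "Ent M A = - (\<integral>x. log 2 (pmf (map_pmf A M) x) \<partial>map_pmf A M)"
proof -
  interpret information_space "measure_pmf M" 2 by standard simp
  have "distr (measure_pmf M) (count_space UNIV) A = density (count_space UNIV) (pmf (map_pmf A M))"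
    by (metis map_pmf_rep_eq measure_pmf_eq_density)
  then have "distributed (measure_pmf M) (count_space UNIV) A (pmf (map_pmf A M))"
    by (simp add: distributed_def)
  then have "Ent M A = - (\<integral>x. pmf (map_pmf A M) x * log 2 (pmf (map_pmf A M) x) \<partial>count_space UNIV)"
    unfolding Ent_def by (rule entropy_distr) simp
  also have "\<dots> = - (\<integral>x. log 2 (pmf (map_pmf A M) x) \<partial>density (count_space UNIV) (pmf (map_pmf A M)))"
    by (subst integral_density) simp_all
  also have "\<dots> = - (\<integral>x. log 2 (pmf (map_pmf A M) x) \<partial>map_pmf A M)"
    by (metis measure_pmf_eq_density)
  finally show ?thesis .
qed

lemma Ent_cong: "map_pmf A M = map_pmf B N \<Longrightarrow> Ent M A = Ent N B"
  by (simp add: Ent_eq_integral)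

lemma Ent_nonneg: "0 \<le> Ent M A"
proof -
  have "0 \<le> (\<integral>x. - log 2 (pmf (map_pmf A M) x) \<partial>map_pmf A M)"
    by (intro integral_nonneg_AE) (auto simp: AE_measure_pmf_iff pmf_le_1 pmf_positive)
  then show ?thesis by (simp add: Ent_eq_integral)
qed

lemma pmi_eq_log_cond:
  assumes "z \<in> set_pmf r"
  shows "pmi r z = log 2 (pmf r z / pmf (map_pmf snd r) (snd z)) - log 2 (pmf (map_pmf fst r) (fst z))"
proof -
  have "0 < pmf r z" "0 < pmf (map_pmf fst r) (fst z)" "0 < pmf (map_pmf snd r) (snd z)"
    using assms by (auto intro: pmf_positive)
  then show ?thesis
    by (simp add: pmi_def dependence_ratio_def log_divide log_mult)
qed

lemma MI_le_Ent:
  assumes fin: "finite (A ` set_pmf M)"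
  shows "MI M A B \<le> Ent M A"
proof -
  define r where "r = map_pmf (\<lambda>w. (A w, B w)) M"
  have Ent_eq: "Ent M A = (\<integral>z. - log 2 (pmf (map_pmf fst r) (fst z)) \<partial>r)"
    by (simp add: Ent_eq_integral r_def map_pmf_comp)
  moreover have "MI M A B = (\<integral>z. pmi r z \<partial>r)"
    using fin by (simp add: MI_eq_integral_pmi r_def)
  moreover have "(\<integral>z. pmi r z \<partial>r) \<le> (\<integral>z. - log 2 (pmf (map_pmf fst r) (fst z)) \<partial>r)"
  proof (cases "integrable r (pmi r)")
    case True
    have "pmi r z \<le> - log 2 (pmf (map_pmf fst r) (fst z))" if "z \<in> set_pmf r" for z
      using that pmf_le_pmf_map_snd[of r "fst z" "snd z"] pmf_positive[OF that]
      by (simp add: pmi_eq_log_cond)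
    moreover have "finite (set_pmf (map_pmf fst r))"
      using fin by (simp add: r_def image_image)
    then have "integrable (map_pmf fst r) (\<lambda>x. - log 2 (pmf (map_pmf fst r) x))"
      by (rule integrable_measure_pmf_finite)
    ultimately show ?thesis
      using True by (intro integral_mono_AE) (auto simp: AE_measure_pmf_iff)
  next
    case False
    then show ?thesis
      using Ent_nonneg[of M A] Ent_eq by (simp add: not_integrable_integral_eq)
  qed
  ultimately show ?thesis by simp
qed

lemma MI_eq_Ent_if_determined:
  assumes fin: "finite (A ` set_pmf M)"
    and det: "\<And>w w'. w \<in> set_pmf M \<Longrightarrow> w' \<in> set_pmf M \<Longrightarrow> B w = B w' \<Longrightarrow> A w = A w'"
  shows "MI M A B = Ent M A"
proof -
  define r where "r = map_pmf (\<lambda>w. (A w, B w)) M"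
  have cond_1: "pmf r z / pmf (map_pmf snd r) (snd z) = 1" if z: "z \<in> set_pmf r" for z
  proof -
    obtain w where w: "w \<in> set_pmf M" "z = (A w, B w)"
      using z by (auto simp: r_def)
    have "snd -` {snd z} \<inter> set_pmf r = {z}"
    proof (intro equalityI subsetI)
      fix x assume "x \<in> snd -` {snd z} \<inter> set_pmf r"
      then obtain w' where "w' \<in> set_pmf M" "x = (A w', B w')" "B w' = B w"
        using w by (auto simp: r_def)
      then show "x \<in> {z}"
        using det[OF _ w(1)] w(2) by auto
    qed (use z in auto)
    then have "measure r (snd -` {snd z}) = measure r {z}"
      by (metis measure_Int_set_pmf)
    then show ?thesis
      using pmf_positive[OF z] by (simp add: pmf_map measure_pmf_single)
  qed
  have "AE z in r. pmi r z = - log 2 (pmf (map_pmf fst r) (fst z))"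
    by (simp add: AE_measure_pmf_iff pmi_eq_log_cond cond_1)
  then have "(\<integral>z. pmi r z \<partial>r) = (\<integral>z. - log 2 (pmf (map_pmf fst r) (fst z)) \<partial>r)"
    by (intro integral_cong_AE) simp_all
  then show ?thesis
    using fin by (simp add: MI_eq_integral_pmi Ent_eq_integral r_def map_pmf_comp)
qed

lemma integral_log_pmf_ratio_nonpos:
  fixes r s :: "'a pmf"
  assumes supp: "set_pmf r \<subseteq> set_pmf s"
    and int: "integrable r (\<lambda>x. log 2 (pmf s x / pmf r x))"
  shows "(\<integral>x. log 2 (pmf s x / pmf r x) \<partial>r) \<le> 0"
proof -
  define t where "t x = pmf s x / pmf r x" for x
  have t_nonneg: "0 \<le> t x" for x
    by (simp add: t_def)
  have nn_t: "(\<integral>\<^sup>+x. t x \<partial>r) \<le> 1"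
  proof -
    have "(\<integral>\<^sup>+x. t x \<partial>r) = (\<integral>\<^sup>+x. ennreal (pmf r x) * ennreal (t x) \<partial>count_space UNIV)"
      by (rule nn_integral_measure_pmf)
    also have "\<dots> \<le> (\<integral>\<^sup>+x. pmf s x \<partial>count_space UNIV)"
      by (intro nn_integral_mono) (simp add: t_def ennreal_mult'[symmetric])
    also have "\<dots> = 1"
      by (simp add: nn_integral_pmf)
    finally show ?thesis .
  qed
  have t_int: "integrable r t"
    using nn_t t_nonneg by (intro integrableI_nonneg) (auto simp: top.not_eq_extremum intro: le_less_trans)
  have "integral\<^sup>L r t \<le> 1"
    using nn_t t_nonneg by (subst integral_eq_nn_integral) (auto intro: enn2real_leI)
  have "log 2 (t x) \<le> (t x - 1) / ln 2" if "x \<in> set_pmf r" for x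
  proof -
    have "0 < t x"
      using that supp by (auto simp: t_def pmf_positive)
    then show ?thesis
      using ln_le_minus_one[of "t x"] by (simp add: log_def divide_right_mono)
  qed
  moreover have "integrable r (\<lambda>x. (t x - 1) / ln 2)"
    using t_int by simp
  ultimately have "(\<integral>x. log 2 (t x) \<partial>r) \<le> (\<integral>x. (t x - 1) / ln 2 \<partial>r)"
    using int unfolding t_def by (intro integral_mono_AE) (auto simp: AE_measure_pmf_iff)
  also have "\<dots> = (integral\<^sup>L r t - 1) / ln 2"
    using t_int by (simp add: integral_diff)
  also have "\<dots> \<le> 0"
    using \<open>integral\<^sup>L r t \<le> 1\<close> by (simp add: divide_nonpos_pos)
  finally show ?thesis
    by (simp add: t_def)
qed

lemma MI_nonneg:
  assumes finA: "finite (A ` set_pmf M)" and finB: "finite (B ` set_pmf M)"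
  shows "0 \<le> MI M A B"
proof -
  define r where "r = map_pmf (\<lambda>w. (A w, B w)) M"
  define s where "s = pair_pmf (map_pmf fst r) (map_pmf snd r)"
  have supp: "set_pmf r \<subseteq> set_pmf s"
    by (force simp: s_def)
  have "finite (set_pmf r)"
    by (rule finite_subset[OF _ finite_cartesian_product[OF finA finB]]) (auto simp: r_def)
  then have "(\<integral>z. log 2 (pmf s z / pmf r z) \<partial>r) \<le> 0"
    by (intro integral_log_pmf_ratio_nonpos supp integrable_measure_pmf_finite)
  moreover have "AE z in r. pmi r z = - log 2 (pmf s z / pmf r z)"
    by (auto simp: AE_measure_pmf_iff pmi_def dependence_ratio_def s_def pmf_pair log_divide pmf_positive)
  then have "(\<integral>z. pmi r z \<partial>r) = - (\<integral>z. log 2 (pmf s z / pmf r z) \<partial>r)"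
    by (subst integral_minus[symmetric], intro integral_cong_AE) simp_all
  ultimately show ?thesis
    using finA by (simp add: MI_eq_integral_pmi r_def)
qed

lemma measure_cond_pmf:
  assumes ne: "set_pmf p \<inter> S \<noteq> {}"
  shows "measure (cond_pmf p S) T = measure p (T \<inter> S) / measure p S"
proof -
  obtain x where "x \<in> set_pmf p" "x \<in> S"
    using ne by blast
  then have pos: "0 < measure p S"
    by (rule measure_pmf_posI)
  have "emeasure (cond_pmf p S) T = emeasure p (S \<inter> T) / emeasure p S"
    unfolding cond_pmf.rep_eq[OF ne] by simp
  also have "\<dots> = ennreal (measure p (T \<inter> S) / measure p S)"
    using pos by (simp add: measure_pmf.emeasure_eq_measure divide_ennreal Int_commute)
  finally show ?thesis
    by (simp add: measure_pmf.emeasure_eq_measure)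
qed

lemma cond_indep_coupling:
  fixes M :: "'w pmf" and A :: "'w \<Rightarrow> 'a" and C :: "'w \<Rightarrow> 'c" and Z :: "'w \<Rightarrow> 'z"
  obtains s :: "('a \<times> 'c \<times> 'z) pmf" where
    "\<And>w. w \<in> set_pmf M \<Longrightarrow> pmf s (A w, C w, Z w) =
       pmf (map_pmf (\<lambda>w. (A w, Z w)) M) (A w, Z w) * pmf (map_pmf (\<lambda>w. (C w, Z w)) M) (C w, Z w)
       / pmf (map_pmf Z M) (Z w)"
proof
  define K where "K z = map_pmf C (cond_pmf M (Z -` {z}))" for z
  define s where "s = bind_pmf (map_pmf (\<lambda>w. (A w, Z w)) M) (\<lambda>(a, z). map_pmf (\<lambda>c. (a, c, z)) (K z))"
  fix w assume w: "w \<in> set_pmf M"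
  define a c z where "a = A w" and "c = C w" and "z = Z w"
  have "pmf s (a, c, z) = (\<integral>y. pmf ((\<lambda>(a, z). map_pmf (\<lambda>c. (a, c, z)) (K z)) y) (a, c, z) \<partial>map_pmf (\<lambda>w. (A w, Z w)) M)"
    unfolding s_def pmf_bind ..
  also have "\<dots> = pmf (map_pmf (\<lambda>c. (a, c, z)) (K z)) (a, c, z) * pmf (map_pmf (\<lambda>w. (A w, Z w)) M) (a, z)"
    by (subst integral_measure_pmf_real[where A="{(a, z)}"]) (auto simp flip: set_pmf_iff split: prod.splits)
  also have "pmf (map_pmf (\<lambda>c. (a, c, z)) (K z)) (a, c, z) = pmf (K z) c"
    by (rule pmf_map_inj') (auto simp: inj_def)
  also have "\<dots> = measure M ((\<lambda>w. (C w, Z w)) -` {(c, z)}) / measure M (Z -` {z})"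
    using w unfolding K_def z_def pmf_map
    by (subst measure_cond_pmf) (auto simp: vimage_def Int_def conj_commute)
  finally show "pmf s (A w, C w, Z w) =
       pmf (map_pmf (\<lambda>w. (A w, Z w)) M) (A w, Z w) * pmf (map_pmf (\<lambda>w. (C w, Z w)) M) (C w, Z w)
       / pmf (map_pmf Z M) (Z w)"
    by (simp add: a_def c_def z_def pmf_map)
qed

lemma integrable_pmi_finite:
  assumes finA: "finite (A ` set_pmf M)" and finB: "finite (B ` set_pmf M)"
  shows "integrable M (\<lambda>w. pmi (map_pmf (\<lambda>w. (A w, B w)) M) (A w, B w))"
proof -
  have "finite (set_pmf (map_pmf (\<lambda>w. (A w, B w)) M))"
    by (rule finite_subset[OF _ finite_cartesian_product[OF finA finB]]) auto
  then have "integrable (map_pmf (\<lambda>w. (A w, B w)) M) (pmi (map_pmf (\<lambda>w. (A w, B w)) M))"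
    by (rule integrable_measure_pmf_finite)
  then show ?thesis
    by simp
qed

lemma pmi_diff_eq_log_cond_indep:
  fixes M :: "'w pmf" and A :: "'w \<Rightarrow> 'a" and C :: "'w \<Rightarrow> 'c" and Z :: "'w \<Rightarrow> 'z"
  defines "pAC \<equiv> map_pmf (\<lambda>w. (A w, C w)) M" and "pAZ \<equiv> map_pmf (\<lambda>w. (A w, Z w)) M"
    and "pCZ \<equiv> map_pmf (\<lambda>w. (C w, Z w)) M" and "r \<equiv> map_pmf (\<lambda>w. (A w, C w, Z w)) M"
  assumes w: "w \<in> set_pmf M"
    and cond_indep: "pmf r (A w, C w, Z w) * pmf (map_pmf C M) (C w) = pmf pAC (A w, C w) * pmf pCZ (C w, Z w)"
  shows "pmi pAZ (A w, Z w) - pmi pAC (A w, C w) =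
    log 2 (pmf pAZ (A w, Z w) * pmf pCZ (C w, Z w) / pmf (map_pmf Z M) (Z w) / pmf r (A w, C w, Z w))"
proof -
  have pos: "0 < pmf pAC (A w, C w)" "0 < pmf (map_pmf A M) (A w)" "0 < pmf (map_pmf C M) (C w)"
    "0 < pmf pAZ (A w, Z w)" "0 < pmf (map_pmf Z M) (Z w)" "0 < pmf pCZ (C w, Z w)"
    "0 < pmf r (A w, C w, Z w)"
    using w by (auto simp: pAC_def pAZ_def pCZ_def r_def intro!: pmf_positive)
  have "pmf pCZ (C w, Z w) = pmf r (A w, C w, Z w) * pmf (map_pmf C M) (C w) / pmf pAC (A w, C w)"
    using cond_indep pos by (simp add: field_simps)
  then have "pmf pAZ (A w, Z w) * pmf pCZ (C w, Z w) / pmf (map_pmf Z M) (Z w) / pmf r (A w, C w, Z w) =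
      pmf pAZ (A w, Z w) * pmf (map_pmf C M) (C w) / (pmf (map_pmf Z M) (Z w) * pmf pAC (A w, C w))"
    using pos by (simp add: field_simps)
  then show ?thesis
    using pos by (simp add: pmi_def dependence_ratio_def pAC_def pAZ_def map_pmf_comp log_divide log_mult)
qed

lemma MI_le_MI_if_cond_indep:
  fixes M :: "'w pmf" and A :: "'w \<Rightarrow> 'a" and C :: "'w \<Rightarrow> 'c" and Z :: "'w \<Rightarrow> 'z"
  defines "pAC \<equiv> map_pmf (\<lambda>w. (A w, C w)) M" and "pAZ \<equiv> map_pmf (\<lambda>w. (A w, Z w)) M"
    and "pCZ \<equiv> map_pmf (\<lambda>w. (C w, Z w)) M" and "r \<equiv> map_pmf (\<lambda>w. (A w, C w, Z w)) M"
  assumes finA: "finite (A ` set_pmf M)" and finC: "finite (C ` set_pmf M)"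
    and cond_indep: "\<And>w. w \<in> set_pmf M \<Longrightarrow>
      pmf r (A w, C w, Z w) * pmf (map_pmf C M) (C w) = pmf pAC (A w, C w) * pmf pCZ (C w, Z w)"
  shows "MI M A Z \<le> MI M A C"
proof (cases "integrable M (\<lambda>w. pmi pAZ (A w, Z w))")
  \<comment> \<open>A non-integrable integrand has Bochner integral 0, so then only \<open>MI M A C \<ge> 0\<close> is needed.\<close>
  case False
  then show ?thesis
    using MI_nonneg[OF finA finC] by (simp add: MI_eq_integral_pmi[OF finA] pAZ_def not_integrable_integral_eq)
next
  case True
  obtain s where s: "\<And>w. w \<in> set_pmf M \<Longrightarrow>
      pmf s (A w, C w, Z w) = pmf pAZ (A w, Z w) * pmf pCZ (C w, Z w) / pmf (map_pmf Z M) (Z w)"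
    using cond_indep_coupling[of M A C Z] unfolding pAZ_def pCZ_def by blast
  \<comment> \<open>\<open>MI M A Z - MI M A C\<close> is \<open>-KL(r \<parallel> s)\<close> for the coupling \<open>s\<close> of \<open>(A, Z)\<close> and \<open>(C, Z)\<close>
     that is conditionally independent given \<open>Z\<close>; Gibbs' inequality makes it nonpositive.\<close>
  define ratio where "ratio x = log 2 (pmf s x / pmf r x)" for x
  have log_ratio: "pmi pAZ (A w, Z w) - pmi pAC (A w, C w) = ratio (A w, C w, Z w)"
    if w: "w \<in> set_pmf M" for w
    using pmi_diff_eq_log_cond_indep[OF w cond_indep[OF w, unfolded r_def pAC_def pCZ_def]]
    by (simp add: ratio_def s[OF w] pAC_def pAZ_def pCZ_def r_def)
  have int_AC: "integrable M (\<lambda>w. pmi pAC (A w, C w))"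
    unfolding pAC_def by (rule integrable_pmi_finite[OF finA finC])
  have "integrable M (\<lambda>w. ratio (A w, C w, Z w))"
    using Bochner_Integration.integrable_diff[OF True int_AC]
    by (rule integrable_cong_AE_imp) (simp_all add: AE_measure_pmf_iff log_ratio)
  then have int_ratio: "integrable r (\<lambda>x. log 2 (pmf s x / pmf r x))"
    unfolding r_def ratio_def by simp
  have "MI M A Z - MI M A C = (\<integral>w. pmi pAZ (A w, Z w) - pmi pAC (A w, C w) \<partial>M)"
    using True int_AC
    by (simp add: MI_eq_integral_pmi[OF finA] pAZ_def pAC_def Bochner_Integration.integral_diff)
  also have "\<dots> = (\<integral>w. ratio (A w, C w, Z w) \<partial>M)"
    by (intro integral_cong_AE) (simp_all add: AE_measure_pmf_iff log_ratio)
  also have "\<dots> = (\<integral>x. ratio x \<partial>r)"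
    by (simp add: r_def)
  also have "\<dots> \<le> 0"
  proof (unfold ratio_def, rule integral_log_pmf_ratio_nonpos)
    show "set_pmf r \<subseteq> set_pmf s"
    proof
      fix x assume "x \<in> set_pmf r"
      then obtain w where w: "w \<in> set_pmf M" "x = (A w, C w, Z w)"
        by (auto simp: r_def)
      then have "0 < pmf s x"
        by (auto simp: s pAZ_def pCZ_def intro!: divide_pos_pos mult_pos_pos pmf_positive)
      then show "x \<in> set_pmf s"
        by (simp add: set_pmf_iff)
    qed
  qed (rule int_ratio)
  finally show ?thesis by simp
qed

lemma MI_inj_right:
  assumes finA: "finite (A ` set_pmf M)" and inj: "inj_on f (B ` set_pmf M)"
  shows "MI M A (\<lambda>w. f (B w)) = MI M A B"
proof -
  have "pmi (map_pmf (\<lambda>w. (A w, f (B w))) M) (A w, f (B w)) = pmi (map_pmf (\<lambda>w. (A w, B w)) M) (A w, B w)"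
    if w: "w \<in> set_pmf M" for w
  proof -
    have "inj_on (\<lambda>(a, b). (a, f b)) (set_pmf (map_pmf (\<lambda>w. (A w, B w)) M))"
      using inj by (auto simp: inj_on_def)
    then have "pmf (map_pmf (\<lambda>w. (A w, f (B w))) M) (A w, f (B w)) = pmf (map_pmf (\<lambda>w. (A w, B w)) M) (A w, B w)"
      using pmf_map_inj[of "\<lambda>(a, b). (a, f b)" "map_pmf (\<lambda>w. (A w, B w)) M" "(A w, B w)"] w
      by (simp add: map_pmf_comp)
    moreover have "pmf (map_pmf (\<lambda>w. f (B w)) M) (f (B w)) = pmf (map_pmf B M) (B w)"
      using pmf_map_inj[of f "map_pmf B M" "B w"] inj w by (simp add: map_pmf_comp)
    ultimately show ?thesis
      by (simp add: pmi_def dependence_ratio_def map_pmf_comp)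
  qed
  then show ?thesis
    using finA by (simp add: MI_eq_integral_pmi) (intro integral_cong_AE, simp_all add: AE_measure_pmf_iff)
qed

lemma fst_in_set_pmf_ext: "w \<in> set_pmf (ext P X q) \<Longrightarrow> fst w \<in> set_pmf P"
  by (auto simp: ext_def set_bind_pmf)

lemma finite_image_fst_ext:
  "finite (set_pmf P) \<Longrightarrow> finite ((\<lambda>w. F (fst w)) ` set_pmf (ext P X q))"
  by (rule finite_subset[of _ "F ` set_pmf P"]) (auto dest: fst_in_set_pmf_ext)

lemma map_pmf_fst_ext: "map_pmf (\<lambda>w. F (fst w)) (ext P X q) = map_pmf F P"
  by (simp add: ext_def map_bind_pmf map_pmf_comp bind_return_pmf' flip: map_pmf_def)

lemma ext_return_pmf: "ext P X (\<lambda>x. return_pmf (e x)) = map_pmf (\<lambda>\<omega>. (\<omega>, e (X \<omega>))) P"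
  by (simp add: ext_def map_pmf_def bind_return_pmf)

lemma pmf_map_ext:
  "pmf (map_pmf (\<lambda>w. (F (fst w), X (fst w), snd w)) (ext P X q)) (a, c, z) =
     measure P {\<omega>. F \<omega> = a \<and> X \<omega> = c} * pmf (q c) z"
proof -
  have "pmf (map_pmf (\<lambda>w. (F (fst w), X (fst w), snd w)) (ext P X q)) (a, c, z) =
      (\<integral>\<omega>. pmf (map_pmf (\<lambda>z. (F \<omega>, X \<omega>, z)) (q (X \<omega>))) (a, c, z) \<partial>P)"
    by (simp add: ext_def map_bind_pmf map_pmf_comp pmf_bind)
  also have "\<dots> = (\<integral>\<omega>. indicator {\<omega>. F \<omega> = a \<and> X \<omega> = c} \<omega> * pmf (q c) z \<partial>P)"
    by (intro Bochner_Integration.integral_cong)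
       (auto simp: pmf_map vimage_def measure_pmf_single indicator_def)
  finally show ?thesis
    by simp
qed

lemma ext_cond_indep:
  fixes P :: "'a pmf" and X :: "'a \<Rightarrow> 'x" and Y :: "'a \<Rightarrow> 'y" and q :: "'x \<Rightarrow> nat pmf"
  defines "E \<equiv> ext P X q"
  shows "pmf (map_pmf (\<lambda>w. (Y (fst w), X (fst w), snd w)) E) (a, c, z) * pmf (map_pmf (\<lambda>w. X (fst w)) E) c =
    pmf (map_pmf (\<lambda>w. (Y (fst w), X (fst w))) E) (a, c) * pmf (map_pmf (\<lambda>w. (X (fst w), snd w)) E) (c, z)"
proof -
  have "pmf (map_pmf (\<lambda>w. (X (fst w), snd w)) E) (c, z) =
      pmf (map_pmf (\<lambda>w. ((), X (fst w), snd w)) E) ((), c, z)"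
    using pmf_map_inj'[of "Pair ()" "map_pmf (\<lambda>w. (X (fst w), snd w)) E" "(c, z)"]
    by (simp add: map_pmf_comp inj_def)
  also have "\<dots> = measure P {\<omega>. X \<omega> = c} * pmf (q c) z"
    using pmf_map_ext[of "\<lambda>_. ()" X P q "()" c z] by (simp add: E_def)
  finally have "pmf (map_pmf (\<lambda>w. (X (fst w), snd w)) E) (c, z) = measure P {\<omega>. X \<omega> = c} * pmf (q c) z" .
  moreover have "pmf (map_pmf (\<lambda>w. (Y (fst w), X (fst w))) E) (a, c) = measure P {\<omega>. Y \<omega> = a \<and> X \<omega> = c}"
    using map_pmf_fst_ext[of "\<lambda>\<omega>. (Y \<omega>, X \<omega>)" P X q] by (simp add: E_def pmf_map vimage_def)
  moreover have "pmf (map_pmf (\<lambda>w. X (fst w)) E) c = measure P {\<omega>. X \<omega> = c}"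
    by (simp add: E_def map_pmf_fst_ext pmf_map vimage_def)
  ultimately show ?thesis
    by (simp add: E_def pmf_map_ext)
qed

lemma Indep_const_left: "Indep M (\<lambda>_. k) B"
  unfolding Indep_def by (auto simp: measure_pmf.prob_space)

lemma Indep_const_right: "Indep M A (\<lambda>_. k)"
  unfolding Indep_def by (auto simp: measure_pmf.prob_space)

lemma Indep_map_pmf: "Indep (map_pmf f M) A B \<longleftrightarrow> Indep M (\<lambda>w. A (f w)) (\<lambda>w. B (f w))"
  by (simp add: Indep_def vimage_def)

lemma Indep_ext_const: "Indep (ext P X (\<lambda>_. return_pmf k)) snd G"
  using ext_return_pmf[of P X "\<lambda>_. k"] by (simp add: Indep_map_pmf Indep_const_left)

lemma MI_ext_le_Ent:
  assumes "finite (set_pmf P)"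
  shows "MI (ext P X q) (\<lambda>w. X (fst w)) B \<le> Ent P X"
proof -
  have "MI (ext P X q) (\<lambda>w. X (fst w)) B \<le> Ent (ext P X q) (\<lambda>w. X (fst w))"
    by (rule MI_le_Ent[OF finite_image_fst_ext[OF assms]])
  also have "\<dots> = Ent P X"
    by (rule Ent_cong[OF map_pmf_fst_ext])
  finally show ?thesis .
qed

lemma MI_ext_le_MI:
  assumes fin: "finite (set_pmf P)"
  shows "MI (ext P X q) (\<lambda>w. Y (fst w)) snd \<le> MI P Y X"
proof -
  have "MI (ext P X q) (\<lambda>w. Y (fst w)) snd \<le> MI (ext P X q) (\<lambda>w. Y (fst w)) (\<lambda>w. X (fst w))"
    by (intro MI_le_MI_if_cond_indep finite_image_fst_ext fin ext_cond_indep)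
  also have "\<dots> = MI P Y X"
    by (intro MI_cong) (rule map_pmf_fst_ext[of "\<lambda>\<omega>. (Y \<omega>, X \<omega>)"])
  finally show ?thesis .
qed

lemma Ix_le_Ent:
  assumes "finite (set_pmf P)"
  shows "Ix P X D g u \<le> Ent P X"
  unfolding Ix_def using Indep_ext_const
  by (intro cSUP_least MI_ext_le_Ent assms) blast

lemma Iy_le_MI:
  assumes "finite (set_pmf P)"
  shows "Iy P X Y D g \<le> MI P Y X"
  unfolding Iy_def using Indep_ext_const
  by (intro cSUP_least MI_ext_le_MI assms) blast

lemma Ent_le_Ix:
  fixes X :: "'a \<Rightarrow> 'x"
  assumes fin: "finite (set_pmf P)"
    and det: "\<And>\<omega> \<omega>'. \<omega> \<in> set_pmf P \<Longrightarrow> \<omega>' \<in> set_pmf P \<Longrightarrow> u \<omega> = u \<omega>' \<Longrightarrow> X \<omega> = X \<omega>'"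
  shows "Ent P X \<le> Ix P X D g u"
proof -
  define q0 :: "'x \<Rightarrow> nat pmf" where "q0 = (\<lambda>_. return_pmf 0)"
  have "Ent P X = Ent (ext P X q0) (\<lambda>w. X (fst w))"
    by (rule Ent_cong[OF map_pmf_fst_ext, symmetric])
  also have "\<dots> = MI (ext P X q0) (\<lambda>w. X (fst w)) (\<lambda>w. (u (fst w), g (D (fst w)), snd w))"
    by (rule MI_eq_Ent_if_determined[symmetric, OF finite_image_fst_ext[OF fin]])
       (auto dest: fst_in_set_pmf_ext intro: det)
  also have "\<dots> \<le> Ix P X D g u"
    unfolding Ix_def using Indep_ext_const[of P X 0] MI_ext_le_Ent[OF fin]
    by (intro cSUP_upper bdd_aboveI2) (auto simp: q0_def)
  finally show ?thesis .
qed

lemma MI_le_Iy_const: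
  assumes fin: "finite (set_pmf P)"
  shows "MI P Y X \<le> Iy P X Y D (\<lambda>_. k)"
proof -
  \<comment> \<open>Encodings are \<open>nat\<close>-valued, so the encoding reproducing \<open>x\<close> relabels it injectively.\<close>
  define e where "e = to_nat_on (X ` set_pmf P)"
  have inj: "inj_on e (X ` set_pmf P)"
    unfolding e_def using fin by (intro inj_on_to_nat_on) (simp add: countable_finite)
  define q1 where "q1 = (\<lambda>x. return_pmf (e x))"
  have "MI P Y X = MI P Y (\<lambda>\<omega>. e (X \<omega>))"
    using fin inj by (simp add: MI_inj_right)
  also have "\<dots> = MI (ext P X q1) (\<lambda>w. Y (fst w)) snd"
    by (intro MI_cong) (simp add: q1_def ext_return_pmf map_pmf_comp)
  also have "\<dots> \<le> Iy P X Y D (\<lambda>_. k)"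
    unfolding Iy_def using MI_ext_le_MI[OF fin]
    by (intro cSUP_upper bdd_aboveI2) (auto simp: Indep_const_right)
  finally show ?thesis .
qed

theorem lemmaA1:
  fixes P :: "'a pmf" and X :: "'a \<Rightarrow> 'x" and Y :: "'a \<Rightarrow> 'y" and D :: "'a \<Rightarrow> 'd"
    and g :: "'d \<Rightarrow> nat" and u :: "'a \<Rightarrow> nat"
  assumes "finite (set_pmf P)"
    and "\<forall>g' u'. Ix P X D g' u' + Iy P X Y D g' \<le> Ix P X D g u + Iy P X Y D g"
  shows "Ix P X D g u = Ent P X \<and> Iy P X Y D g = MI P Y X"
proof -
  define u0 where "u0 \<omega> = to_nat_on (X ` set_pmf P) (X \<omega>)" for \<omega>
  have "inj_on (to_nat_on (X ` set_pmf P)) (X ` set_pmf P)"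
    using assms(1) by (intro inj_on_to_nat_on) (simp add: countable_finite)
  then have "Ent P X \<le> Ix P X D (\<lambda>_. 0) u0"
    using assms(1) by (intro Ent_le_Ix) (auto simp: u0_def dest: inj_onD)
  moreover have "MI P Y X \<le> Iy P X Y D (\<lambda>_. 0)"
    using assms(1) by (rule MI_le_Iy_const)
  moreover have "Ix P X D (\<lambda>_. 0) u0 + Iy P X Y D (\<lambda>_. 0) \<le> Ix P X D g u + Iy P X Y D g"
    using assms(2) by blast
  ultimately show ?thesis
    using Ix_le_Ent[OF assms(1), of X D g u] Iy_le_MI[OF assms(1), of X Y D g] by linarith
qed

end
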